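(* Let $\bar n_s>0$, $\eta\in[0,1]$, $\bar n_B\ge0$, and $N=(1-\eta)\bar n_B$. Alice prepares a two-mode squeezed vacuum state $\sum_{k\ge0}\sqrt{\frac{\bar n_s^k}{(1+\bar n_s)^{k+1}}}|k\rangle_A|k\rangle_R$ and measures the reference mode $R$ with an on-off detector $c_i$. Under hypothesis $H_1$ the signal mode $A$ is sent through the lossy thermal-noise bosonic channel with transmittance $\eta$ and environment mean photon number $\bar n_B$ and then measured with an on-off detector $c_s$; under $H_0$ the signal is discarded and $c_s$ measures the channel output with vacuum input (a thermal state of mean photon number $N$). Let $p^{m}_{\mathrm{CC}}$ be the probability that both $c_i$ and $c_s$ click under $H_m$. Then $$p^0_{\mathrm{CC}}=\Big(1-\frac{1}{1+\bar n_s}\Big)\Big(1-\frac{1}{1+N}\Big),\qquad p^1_{\mathrm{CC}}\ge\Big(1-\frac{1}{1+\bar n_s}\Big)\Big(1-\frac{1}{1+N}+\frac{\eta}{(1+N)^2}\Big).$$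
   Context: An on-off detector clicks on a single-mode state $\hat\rho$ with probability $1-\langle0|\hat\rho|0\rangle$ and, upon clicking, projects onto the span of Fock states $|k\rangle$, $k\ge1$. The lossy thermal-noise bosonic channel with transmittance $\eta$ and environment mean photon number $\bar n_B$ is a beamsplitter of transmittance $\eta$ mixing the input mode with an environment mode in the thermal state $\sum_{k\ge0}\frac{\bar n_B^k}{(1+\bar n_B)^{k+1}}|k\rangle\langle k|$, with the environment output traced out. *)

theory Defs
  imports Complex_Main
begin

text \<open>Fock-basis amplitudes of the two-mode squeezed vacuum:
  |psi> = sum_k tmsv_amp ns k |k>_A |k>_R.\<close>
definition tmsv_amp :: "real \<Rightarrow> nat \<Rightarrow> real" where
  "tmsv_amp ns k = sqrt (ns ^ k / (1 + ns) ^ (k + 1))"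

definition thermal :: "real \<Rightarrow> nat \<Rightarrow> real" where
  "thermal nB k = nB ^ k / (1 + nB) ^ (k + 1)"

text \<open>Beamsplitter of transmittance eta acting on the input modes (signal a, environment b),
  given by the mode transformation
    a^dagger  ->  sqrt eta c^dagger + sqrt(1-eta) d^dagger,
    b^dagger  -> -sqrt(1-eta) c^dagger + sqrt eta d^dagger,
  where c is the channel output mode and d the environment output mode.
  bs_amp eta k j m n is the matrix element  <m|_c <n|_d U |k>_a |j>_b, obtained by expanding
  (a^dagger)^k (b^dagger)^j |0,0> / sqrt(k! j!) with the binomial theorem.\<close>
definition bs_amp :: "real \<Rightarrow> nat \<Rightarrow> nat \<Rightarrow> nat \<Rightarrow> nat \<Rightarrow> real" where
  "bs_amp eta k j m n =
     (if m + n = k + j then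
        sqrt (fact m * fact n / (fact k * fact j)) *
        (\<Sum>a\<le>k. \<Sum>b\<le>j. if a + b = m then
            real (k choose a) * real (j choose b) *
            sqrt eta ^ (a + (j - b)) * sqrt (1 - eta) ^ ((k - a) + b) * (-1) ^ b
          else 0)
      else 0)"

text \<open>Probability that the output of the lossy thermal-noise channel (transmittance eta,
  environment thermal with mean nB) is found in Fock state m (and the environment output in
  the photon-number-conserving state k + j - m, traced out), when the input is Fock state k:
  sum over the thermal environment photon number j.  Output photon numbers m with
  m > k + j have zero amplitude, so the inner sum over m \<ge> 1 is finite.\<close>
definition out_click_given :: "real \<Rightarrow> real \<Rightarrow> nat \<Rightarrow> real" where
  "out_click_given eta nB k =
     (\<Sum>j. thermal nB j * (\<Sum>m\<in>{1..k + j}. (bs_amp eta k j m (k + j - m))\<^sup>2))"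

text \<open>H1: the reference mode R is measured with an on-off detector (click = projection onto
  Fock states r \<ge> 1); since the TMSV is photon-number correlated, the signal mode is then in
  Fock state r, sent through the channel, and the output measured by an on-off detector.\<close>
definition pCC1 :: "real \<Rightarrow> real \<Rightarrow> real \<Rightarrow> real" where
  "pCC1 ns eta nB = (\<Sum>r. if 1 \<le> r then (tmsv_amp ns r)\<^sup>2 * out_click_given eta nB r else 0)"

text \<open>H0: the signal is discarded; R is in its reduced TMSV state, and the channel input is
  the vacuum (Fock state 0).\<close>
definition pCC0 :: "real \<Rightarrow> real \<Rightarrow> real \<Rightarrow> real" where
  "pCC0 ns eta nB = (\<Sum>r. if 1 \<le> r then (tmsv_amp ns r)\<^sup>2 * out_click_given eta nB 0 else 0)"

end

theory Submission
  imports Defs "HOL-Analysis.Analysis"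
begin

text \<open>
  A beamsplitter conserves photon number, and on the n-photon subspace it acts as an orthogonal
  matrix. This is seen on generating functions: with \<open>\<alpha> = sqrt \<eta>\<close>, \<open>\<beta> = sqrt (1 - \<eta>)\<close>,
  the m-th output column has generating polynomial \<open>(\<alpha> y - \<beta>)^m (\<beta> y + \<alpha>)^(n-m)\<close>, and
  \<open>\<alpha>\<^sup>2 + \<beta>\<^sup>2 = 1\<close> collapses the bilinear generating function of the Gram matrix to \<open>(y z + 1)^n\<close>.
  So for k signal and j environment photons the output detector stays dark exactly with the
  probability \<open>C(k+j, k) \<eta>^j (1-\<eta>)^k\<close> that every photon leaves through the environment port.
  Averaging over the thermal environment is a negative binomial series, giving the click
  probability \<open>1 - t^k / (1 + N)\<close> with \<open>t = (1 + N - \<eta>) / (1 + N) \<in> [0, 1]\<close>. Under H0 the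
  input is the vacuum (k = 0); under H1 the reference click guarantees k \<ge> 1, so \<open>t^k \<le> t\<close>.
  The reference itself clicks with probability \<open>1 - 1 / (1 + n_s)\<close>.
\<close>

lemma polyfun_eq_coeffs2:
  fixes c d :: "nat \<Rightarrow> nat \<Rightarrow> 'a::{idom,real_normed_div_algebra}"
  assumes "\<And>y z. (\<Sum>i\<le>n. \<Sum>j\<le>n. c i j * y ^ i * z ^ j) = (\<Sum>i\<le>n. \<Sum>j\<le>n. d i j * y ^ i * z ^ j)"
    and "i \<le> n" "j \<le> n"
  shows "c i j = d i j"
proof -
  have swap: "(\<Sum>i\<le>n. \<Sum>j\<le>n. e i j * y ^ i * z ^ j) = (\<Sum>j\<le>n. (\<Sum>i\<le>n. e i j * y ^ i) * z ^ j)"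
    for e :: "nat \<Rightarrow> nat \<Rightarrow> 'a" and y z
    unfolding sum_distrib_right by (rule sum.swap)
  have coeffs_z: "\<forall>z. (\<Sum>j\<le>n. (\<Sum>i\<le>n. c i j * y ^ i) * z ^ j) = (\<Sum>j\<le>n. (\<Sum>i\<le>n. d i j * y ^ i) * z ^ j)"
    for y
    using assms(1)[unfolded swap] by blast
  have coeffs_y: "(\<Sum>i\<le>n. c i j * y ^ i) = (\<Sum>i\<le>n. d i j * y ^ i)" for y
    using polyfun_eq_coeffs[THEN iffD1, OF coeffs_z[of y]] assms(3) by blast
  show ?thesis
    using polyfun_eq_coeffs[THEN iffD1, OF allI[OF coeffs_y]] assms(2) by blast
qed

text \<open>With \<open>\<alpha> = sqrt \<eta>\<close> and \<open>\<beta> = sqrt (1 - \<eta>)\<close> this is the sum inside \<^const>\<open>bs_amp\<close>.\<close>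
definition bs_poly_coeff :: "real \<Rightarrow> real \<Rightarrow> nat \<Rightarrow> nat \<Rightarrow> nat \<Rightarrow> real" where
  "bs_poly_coeff \<alpha> \<beta> k j m = (\<Sum>a\<le>k. \<Sum>b\<le>j. if a + b = m then
     real (k choose a) * real (j choose b) * \<alpha> ^ (a + (j - b)) * \<beta> ^ ((k - a) + b) * (-1) ^ b
   else 0)"

lemma bs_poly_coeff_gen_fun:
  "(\<Sum>m\<le>k + j. bs_poly_coeff \<alpha> \<beta> k j m * x ^ m) = (\<alpha> * x + \<beta>) ^ k * (\<alpha> - \<beta> * x) ^ j"
proof -
  define T where "T a b = real (k choose a) * real (j choose b) *
    \<alpha> ^ (a + (j - b)) * \<beta> ^ ((k - a) + b) * (-1) ^ b" for a b
  have "(\<Sum>m\<le>k + j. bs_poly_coeff \<alpha> \<beta> k j m * x ^ m) =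
        (\<Sum>m\<le>k + j. \<Sum>a\<le>k. \<Sum>b\<le>j. if a + b = m then T a b * x ^ m else 0)"
    unfolding bs_poly_coeff_def sum_distrib_right T_def by (intro sum.cong refl) simp
  also have "\<dots> = (\<Sum>a\<le>k. \<Sum>b\<le>j. \<Sum>m\<le>k + j. if a + b = m then T a b * x ^ m else 0)"
    by (subst sum.swap, rule sum.cong[OF refl], rule sum.swap)
  also have "\<dots> = (\<Sum>a\<le>k. \<Sum>b\<le>j. T a b * x ^ (a + b))"
    by (intro sum.cong refl) (simp add: sum.delta')
  also have "\<dots> = (\<Sum>a\<le>k. \<Sum>b\<le>j.
      (real (k choose a) * (\<alpha> * x) ^ a * \<beta> ^ (k - a)) *
      (real (j choose b) * (- (\<beta> * x)) ^ b * \<alpha> ^ (j - b)))"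
    unfolding T_def power_minus[of "\<beta> * x"] power_add power_mult_distrib
    by (intro sum.cong refl) (simp add: mult_ac)
  also have "\<dots> = (\<alpha> * x + \<beta>) ^ k * (- (\<beta> * x) + \<alpha>) ^ j"
    by (simp only: binomial_ring[of "\<alpha> * x" \<beta> k] binomial_ring[of "- (\<beta> * x)" \<alpha> j] sum_product)
  also have "- (\<beta> * x) + \<alpha> = \<alpha> - \<beta> * x"
    by simp
  finally show ?thesis .
qed

text \<open>Up to the normalisation \<open>sqrt (C(n,k) C(n,m))\<close>, the matrix entry of the beamsplitter
  from k input signal photons (out of n) to m output photons.\<close>
definition bs_kernel :: "real \<Rightarrow> real \<Rightarrow> nat \<Rightarrow> nat \<Rightarrow> nat \<Rightarrow> real" where
  "bs_kernel \<alpha> \<beta> n k m = real (n choose k) * bs_poly_coeff \<alpha> \<beta> k (n - k) m"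

lemma bs_kernel_gen_fun:
  assumes "m \<le> n"
  shows "(\<Sum>k\<le>n. bs_kernel \<alpha> \<beta> n k m * y ^ k) =
         real (n choose m) * (\<alpha> * y - \<beta>) ^ m * (\<beta> * y + \<alpha>) ^ (n - m)"
proof -
  have gen_fun_x: "(\<Sum>m\<le>n. (\<Sum>k\<le>n. bs_kernel \<alpha> \<beta> n k m * y ^ k) * x ^ m) =
        (\<Sum>m\<le>n. (real (n choose m) * (\<alpha> * y - \<beta>) ^ m * (\<beta> * y + \<alpha>) ^ (n - m)) * x ^ m)"
    for x
  proof -
    have "(\<Sum>m\<le>n. (\<Sum>k\<le>n. bs_kernel \<alpha> \<beta> n k m * y ^ k) * x ^ m) =
          (\<Sum>k\<le>n. real (n choose k) * y ^ k * (\<Sum>m\<le>n. bs_poly_coeff \<alpha> \<beta> k (n - k) m * x ^ m))"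
      unfolding bs_kernel_def sum_distrib_right sum_distrib_left
      by (subst sum.swap) (simp only: mult_ac)
    also have "\<dots> = (\<Sum>k\<le>n. real (n choose k) * (y * (\<alpha> * x + \<beta>)) ^ k * (\<alpha> - \<beta> * x) ^ (n - k))"
    proof (intro sum.cong refl)
      fix k
      assume "k \<in> {..n}"
      then have "(\<Sum>m\<le>n. bs_poly_coeff \<alpha> \<beta> k (n - k) m * x ^ m) = (\<alpha> * x + \<beta>) ^ k * (\<alpha> - \<beta> * x) ^ (n - k)"
        using bs_poly_coeff_gen_fun[of \<alpha> \<beta> k "n - k" x] by simp
      then show "real (n choose k) * y ^ k * (\<Sum>m\<le>n. bs_poly_coeff \<alpha> \<beta> k (n - k) m * x ^ m) =
          real (n choose k) * (y * (\<alpha> * x + \<beta>)) ^ k * (\<alpha> - \<beta> * x) ^ (n - k)"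
        by (simp add: power_mult_distrib)
    qed
    also have "\<dots> = (y * (\<alpha> * x + \<beta>) + (\<alpha> - \<beta> * x)) ^ n"
      by (simp only: binomial_ring[of "y * (\<alpha> * x + \<beta>)" "\<alpha> - \<beta> * x" n])
    also have "y * (\<alpha> * x + \<beta>) + (\<alpha> - \<beta> * x) = (\<alpha> * y - \<beta>) * x + (\<beta> * y + \<alpha>)"
      by (simp add: algebra_simps)
    also have "((\<alpha> * y - \<beta>) * x + (\<beta> * y + \<alpha>)) ^ n =
        (\<Sum>m\<le>n. (real (n choose m) * (\<alpha> * y - \<beta>) ^ m * (\<beta> * y + \<alpha>) ^ (n - m)) * x ^ m)"
      unfolding binomial_ring[of "(\<alpha> * y - \<beta>) * x" "\<beta> * y + \<alpha>" n]
      by (intro sum.cong refl) (simp only: power_mult_distrib mult_ac)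
    finally show ?thesis .
  qed
  show ?thesis
    using polyfun_eq_coeffs[THEN iffD1, OF allI[OF gen_fun_x]] assms by blast
qed

lemma bs_kernel_orthogonal:
  assumes "\<alpha>\<^sup>2 + \<beta>\<^sup>2 = 1" and "k \<le> n" "l \<le> n"
  shows "(\<Sum>m\<le>n. bs_kernel \<alpha> \<beta> n k m * bs_kernel \<alpha> \<beta> n l m / real (n choose m)) =
         (if k = l then real (n choose k) else 0)"
proof (rule polyfun_eq_coeffs2[OF _ assms(2,3)])
  fix y z :: real
  let ?K = "bs_kernel \<alpha> \<beta> n"
  have rotate: "(\<Sum>k\<le>n. \<Sum>l\<le>n. \<Sum>m\<le>n. f k l m) = (\<Sum>m\<le>n. \<Sum>k\<le>n. \<Sum>l\<le>n. f k l m)"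
    for f :: "nat \<Rightarrow> nat \<Rightarrow> nat \<Rightarrow> real"
    by (subst sum.swap) (rule sum.cong[OF refl], rule sum.swap)
  have "(\<Sum>k\<le>n. \<Sum>l\<le>n. (\<Sum>m\<le>n. ?K k m * ?K l m / real (n choose m)) * y ^ k * z ^ l) =
        (\<Sum>m\<le>n. \<Sum>k\<le>n. \<Sum>l\<le>n. ?K k m * y ^ k * (?K l m * z ^ l) / real (n choose m))"
    unfolding sum_distrib_right by (subst rotate) (intro sum.cong refl, simp add: mult_ac)
  also have "\<dots> = (\<Sum>m\<le>n. (\<Sum>k\<le>n. ?K k m * y ^ k) * (\<Sum>l\<le>n. ?K l m * z ^ l) / real (n choose m))"
    by (simp only: sum_product sum_divide_distrib)
  also have "\<dots> = (\<Sum>m\<le>n. real (n choose m) * ((\<alpha> * y - \<beta>) * (\<alpha> * z - \<beta>)) ^ m *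
                          ((\<beta> * y + \<alpha>) * (\<beta> * z + \<alpha>)) ^ (n - m))"
    by (intro sum.cong refl) (simp add: bs_kernel_gen_fun power_mult_distrib)
  also have "\<dots> = ((\<alpha> * y - \<beta>) * (\<alpha> * z - \<beta>) + (\<beta> * y + \<alpha>) * (\<beta> * z + \<alpha>)) ^ n"
    by (simp only: binomial_ring)
  also have "(\<alpha> * y - \<beta>) * (\<alpha> * z - \<beta>) + (\<beta> * y + \<alpha>) * (\<beta> * z + \<alpha>) = y * z + 1"
    using assms(1) by algebra
  also have "(y * z + 1) ^ n = (\<Sum>k\<le>n. \<Sum>l\<le>n. (if k = l then real (n choose k) else 0) * y ^ k * z ^ l)"
  proof -
    have "(\<Sum>l\<le>n. (if k = l then real (n choose k) else 0) * y ^ k * z ^ l) = real (n choose k) * (y * z) ^ k"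
      if "k \<le> n" for k
    proof -
      have "(\<Sum>l\<le>n. (if k = l then real (n choose k) else 0) * y ^ k * z ^ l) =
            (\<Sum>l\<le>n. if k = l then real (n choose k) * (y * z) ^ l else 0)"
        by (intro sum.cong refl) (auto simp: power_mult_distrib)
      with that show ?thesis
        by simp
    qed
    then show ?thesis
      by (simp add: binomial_ring[of "y * z" 1 n])
  qed
  finally show "(\<Sum>k\<le>n. \<Sum>l\<le>n. (\<Sum>m\<le>n. ?K k m * ?K l m / real (n choose m)) * y ^ k * z ^ l) =
        (\<Sum>k\<le>n. \<Sum>l\<le>n. (if k = l then real (n choose k) else 0) * y ^ k * z ^ l)" .
qed

lemma bs_amp_sq:
  assumes "m \<le> k + j"
  shows "(bs_amp \<eta> k j m (k + j - m))\<^sup>2 =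
    (bs_kernel (sqrt \<eta>) (sqrt (1 - \<eta>)) (k + j) k m)\<^sup>2 / (real ((k + j) choose m) * real ((k + j) choose k))"
proof -
  have "(bs_amp \<eta> k j m (k + j - m))\<^sup>2 =
      fact m * fact (k + j - m) / (fact k * fact j) * (bs_poly_coeff (sqrt \<eta>) (sqrt (1 - \<eta>)) k j m)\<^sup>2"
    unfolding bs_amp_def bs_poly_coeff_def using assms by (simp add: power_mult_distrib)
  also have "\<dots> = (bs_kernel (sqrt \<eta>) (sqrt (1 - \<eta>)) (k + j) k m)\<^sup>2 /
      (real ((k + j) choose m) * real ((k + j) choose k))"
    unfolding bs_kernel_def using assms
    by (simp add: binomial_fact power_mult_distrib field_simps power2_eq_square)
  finally show ?thesis .
qed

lemma bs_amp_sum_sq: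
  assumes "0 \<le> \<eta>" "\<eta> \<le> 1"
  shows "(\<Sum>m\<le>k + j. (bs_amp \<eta> k j m (k + j - m))\<^sup>2) = 1"
proof -
  have unit: "(sqrt \<eta>)\<^sup>2 + (sqrt (1 - \<eta>))\<^sup>2 = 1"
    using assms by simp
  have "(\<Sum>m\<le>k + j. (bs_amp \<eta> k j m (k + j - m))\<^sup>2) =
      (\<Sum>m\<le>k + j. bs_kernel (sqrt \<eta>) (sqrt (1 - \<eta>)) (k + j) k m ^ 2 / real ((k + j) choose m)) /
      real ((k + j) choose k)"
    unfolding sum_divide_distrib by (intro sum.cong refl) (simp add: bs_amp_sq)
  also have "\<dots> = 1"
    using bs_kernel_orthogonal[OF unit, of k "k + j" k] by (simp add: power2_eq_square)
  finally show ?thesis .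
qed

lemma bs_poly_coeff_0: "bs_poly_coeff \<alpha> \<beta> k j 0 = \<alpha> ^ j * \<beta> ^ k"
proof -
  have "bs_poly_coeff \<alpha> \<beta> k j 0 =
      (\<Sum>a\<le>k. if a = 0 then (\<Sum>b\<le>j. if b = 0 then \<alpha> ^ j * \<beta> ^ k else 0) else 0)"
    unfolding bs_poly_coeff_def by (intro sum.cong refl) auto
  then show ?thesis
    by simp
qed

lemma bs_amp_vacuum_sq:
  assumes "0 \<le> \<eta>" "\<eta> \<le> 1"
  shows "(bs_amp \<eta> k j 0 (k + j))\<^sup>2 = real ((k + j) choose k) * \<eta> ^ j * (1 - \<eta>) ^ k"
proof -
  have "(bs_amp \<eta> k j 0 (k + j))\<^sup>2 =
      fact (k + j) / (fact k * fact j) * (sqrt \<eta> ^ j * sqrt (1 - \<eta>) ^ k)\<^sup>2"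
    using bs_poly_coeff_0[of "sqrt \<eta>" "sqrt (1 - \<eta>)" k j]
    unfolding bs_amp_def bs_poly_coeff_def by (simp add: power_mult_distrib)
  also have "(sqrt \<eta> ^ j * sqrt (1 - \<eta>) ^ k)\<^sup>2 = \<eta> ^ j * (1 - \<eta>) ^ k"
  proof -
    have sqrt_pow_sq: "(sqrt x ^ i)\<^sup>2 = x ^ i" if "0 \<le> x" for x :: real and i
      using that by (metis power_mult mult.commute real_sqrt_pow2)
    show ?thesis
      using assms by (simp add: power_mult_distrib sqrt_pow_sq)
  qed
  also have "fact (k + j) / (fact k * fact j) = real ((k + j) choose k)"
    by (simp add: binomial_fact)
  finally show ?thesis
    by (simp only: mult.assoc)
qed

lemma bs_click_prob:
  assumes "0 \<le> \<eta>" "\<eta> \<le> 1"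
  shows "(\<Sum>m\<in>{1..k + j}. (bs_amp \<eta> k j m (k + j - m))\<^sup>2) =
    1 - real ((k + j) choose k) * \<eta> ^ j * (1 - \<eta>) ^ k"
proof -
  have "{..k + j} = insert 0 {1..k + j}"
    by auto
  then show ?thesis
    using bs_amp_sum_sq[OF assms, of k j] bs_amp_vacuum_sq[OF assms, of k j] by simp
qed

lemma neg_binomial_sums:
  fixes x :: real
  assumes "0 \<le> x" "x < 1"
  shows "(\<lambda>j. real ((k + j) choose j) * x ^ j) sums (1 / (1 - x) ^ (k + 1))"
proof -
  have "\<bar>- x\<bar> < 1"
    using assms by simp
  from gen_binomial_real[OF this, of "- (real k + 1)"]
  have series: "(\<lambda>n. ((- (real k + 1)) gchoose n) * (- x) ^ n) sums (1 + - x) powr (- (real k + 1))" .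
  have "((- (real k + 1)) gchoose n) * (- x) ^ n = real ((k + n) choose n) * x ^ n" for n
  proof -
    have "(- (real k + 1)) gchoose n = (-1) ^ n * ((real k + 1 + real n - 1) gchoose n)"
      by (rule gbinomial_minus)
    then have "(- (real k + 1)) gchoose n = (-1) ^ n * real ((k + n) choose n)"
      by (simp add: binomial_gbinomial)
    moreover have "(-1) ^ n * (- x) ^ n = x ^ n"
      by (simp flip: power_mult_distrib)
    ultimately show ?thesis
      by (metis mult.assoc mult.commute)
  qed
  moreover have "(1 + - x) powr (- (real k + 1)) = 1 / (1 - x) ^ (k + 1)"
  proof -
    have "(1 + - x) powr (- (real k + 1)) = (1 - x) powr (- real (Suc k))"
      by (rule arg_cong2[where f = "(powr)"]) simp_all
    also have "\<dots> = inverse ((1 - x) powr real (Suc k))"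
      by (rule powr_minus)
    also have "\<dots> = inverse ((1 - x) ^ Suc k)"
      using assms by (simp only: powr_realpow diff_gt_0_iff_gt)
    finally show ?thesis
      by (simp add: inverse_eq_divide)
  qed
  ultimately show ?thesis
    using series by simp
qed

lemma thermal_sums:
  assumes "0 \<le> nB"
  shows "thermal nB sums 1"
proof -
  have ratio: "norm (nB / (1 + nB)) < 1"
    using assms by simp
  have "(\<lambda>j. (nB / (1 + nB)) ^ j * (1 / (1 + nB))) sums (1 / (1 - nB / (1 + nB)) * (1 / (1 + nB)))"
    by (rule sums_mult2[OF geometric_sums[OF ratio]])
  moreover have "1 / (1 - nB / (1 + nB)) * (1 / (1 + nB)) = 1"
    using assms by (simp add: field_simps)
  moreover have "(\<lambda>j. (nB / (1 + nB)) ^ j * (1 / (1 + nB))) = thermal nB"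
    by (simp add: thermal_def power_divide fun_eq_iff)
  ultimately show ?thesis
    by simp
qed

lemma thermal_no_click_sums:
  assumes "0 \<le> nB" "0 \<le> \<eta>" "\<eta> \<le> 1"
  shows "(\<lambda>j. thermal nB j * (real ((k + j) choose k) * \<eta> ^ j * (1 - \<eta>) ^ k)) sums
         (((1 - \<eta>) * (1 + nB)) ^ k / (1 + (1 - \<eta>) * nB) ^ (k + 1))"
proof -
  define x where "x = \<eta> * nB / (1 + nB)"
  have "\<eta> * nB \<le> nB"
    using assms by (simp add: mult_left_le_one_le)
  then have x: "0 \<le> x" "x < 1"
    unfolding x_def using assms by (simp_all add: divide_less_eq)
  have one_minus_x: "1 - x = (1 + (1 - \<eta>) * nB) / (1 + nB)"
    unfolding x_def using assms by (simp add: field_simps)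
  have choose_sym: "(j + k) choose j = (j + k) choose k" for j
    using binomial_symmetric[of j "j + k"] by simp
  have "(\<lambda>j. real ((k + j) choose j) * x ^ j * ((1 - \<eta>) ^ k / (1 + nB))) sums
        (1 / (1 - x) ^ (k + 1) * ((1 - \<eta>) ^ k / (1 + nB)))"
    by (rule sums_mult2[OF neg_binomial_sums[OF x]])
  moreover have "real ((k + j) choose j) * x ^ j * ((1 - \<eta>) ^ k / (1 + nB)) =
       thermal nB j * (real ((k + j) choose k) * \<eta> ^ j * (1 - \<eta>) ^ k)" for j
    unfolding thermal_def x_def using assms choose_sym
    by (simp add: power_divide power_mult_distrib field_simps)
  moreover have "1 / (1 - x) ^ (k + 1) * ((1 - \<eta>) ^ k / (1 + nB)) =
       ((1 - \<eta>) * (1 + nB)) ^ k / (1 + (1 - \<eta>) * nB) ^ (k + 1)"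
    using one_minus_x assms by (simp add: power_divide power_mult_distrib)
  ultimately show ?thesis
    by simp
qed

lemma out_click_given_eq:
  fixes \<eta> nB :: real
  defines "N \<equiv> (1 - \<eta>) * nB"
  assumes "0 \<le> nB" "0 \<le> \<eta>" "\<eta> \<le> 1"
  shows "out_click_given \<eta> nB k = 1 - ((1 + N - \<eta>) / (1 + N)) ^ k / (1 + N)"
proof -
  have "(\<lambda>j. thermal nB j - thermal nB j * (real ((k + j) choose k) * \<eta> ^ j * (1 - \<eta>) ^ k)) sums
        (1 - ((1 - \<eta>) * (1 + nB)) ^ k / (1 + N) ^ (k + 1))"
    unfolding N_def by (intro sums_diff thermal_sums thermal_no_click_sums assms)
  moreover have "thermal nB j - thermal nB j * (real ((k + j) choose k) * \<eta> ^ j * (1 - \<eta>) ^ k) =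
      thermal nB j * (\<Sum>m\<in>{1..k + j}. (bs_amp \<eta> k j m (k + j - m))\<^sup>2)" for j
    using assms by (subst bs_click_prob) (simp_all add: right_diff_distrib)
  moreover have "((1 - \<eta>) * (1 + nB)) ^ k / (1 + N) ^ (k + 1) = ((1 + N - \<eta>) / (1 + N)) ^ k / (1 + N)"
    unfolding N_def by (simp add: power_divide algebra_simps)
  ultimately show ?thesis
    unfolding out_click_given_def by (simp add: sums_iff)
qed

lemma out_click_given_bounds:
  fixes \<eta> nB :: real
  defines "N \<equiv> (1 - \<eta>) * nB"
  assumes "0 \<le> nB" "0 \<le> \<eta>" "\<eta> \<le> 1"
  shows "0 \<le> out_click_given \<eta> nB k" "out_click_given \<eta> nB k \<le> 1"
    and "1 \<le> k \<Longrightarrow> 1 - 1 / (1 + N) + \<eta> / (1 + N)\<^sup>2 \<le> out_click_given \<eta> nB k"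
proof -
  define t where "t = (1 + N - \<eta>) / (1 + N)"
  have N: "0 \<le> N"
    unfolding N_def using assms by simp
  have "1 + N - \<eta> = (1 - \<eta>) * (1 + nB)"
    unfolding N_def by (simp add: algebra_simps)
  then have t: "0 \<le> t" "t \<le> 1"
    unfolding t_def using N assms(2-4) by (simp_all add: divide_le_eq_1)
  have out: "out_click_given \<eta> nB k = 1 - t ^ k / (1 + N)"
    unfolding t_def N_def using assms(2-4) by (rule out_click_given_eq)
  have "t ^ k \<le> 1"
    using t by (rule power_le_one)
  then have "t ^ k / (1 + N) \<le> 1"
    using N by simp
  then show "0 \<le> out_click_given \<eta> nB k"
    unfolding out by simp
  show "out_click_given \<eta> nB k \<le> 1"
    unfolding out using N t by simp
  assume "1 \<le> k"
  then have "t ^ k / (1 + N) \<le> t / (1 + N)"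
    using N t by (simp add: divide_right_mono power_decreasing[of 1 k t, simplified])
  also have "t / (1 + N) = (1 + N) / (1 + N)\<^sup>2 - \<eta> / (1 + N)\<^sup>2"
    unfolding t_def by (simp add: power2_eq_square diff_divide_distrib)
  also have "(1 + N) / (1 + N)\<^sup>2 = 1 / (1 + N)"
    using N by (simp add: power2_eq_square)
  finally show "1 - 1 / (1 + N) + \<eta> / (1 + N)\<^sup>2 \<le> out_click_given \<eta> nB k"
    unfolding out by simp
qed

lemma tmsv_amp_sq: "0 \<le> ns \<Longrightarrow> (tmsv_amp ns r)\<^sup>2 = thermal ns r"
  unfolding tmsv_amp_def thermal_def by simp

lemma tmsv_click_sums:
  assumes "0 \<le> ns"
  shows "(\<lambda>r. if 1 \<le> r then (tmsv_amp ns r)\<^sup>2 else 0) sums (1 - 1 / (1 + ns))"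
proof -
  have "(\<lambda>r. (tmsv_amp ns r)\<^sup>2 - (if r = 0 then (tmsv_amp ns r)\<^sup>2 else 0)) sums (1 - (tmsv_amp ns 0)\<^sup>2)"
    using assms thermal_sums[OF assms] by (intro sums_diff sums_single) (simp add: tmsv_amp_sq)
  moreover have "(tmsv_amp ns 0)\<^sup>2 = 1 / (1 + ns)"
    using assms by (simp add: tmsv_amp_sq thermal_def)
  moreover have "(\<lambda>r. (tmsv_amp ns r)\<^sup>2 - (if r = 0 then (tmsv_amp ns r)\<^sup>2 else 0)) =
      (\<lambda>r. if 1 \<le> r then (tmsv_amp ns r)\<^sup>2 else 0)"
    by (auto simp: fun_eq_iff)
  ultimately show ?thesis
    by simp
qed

lemma pCC0_eq:
  fixes ns \<eta> nB :: real
  defines "N \<equiv> (1 - \<eta>) * nB"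
  assumes "0 \<le> ns" "0 \<le> nB" "0 \<le> \<eta>" "\<eta> \<le> 1"
  shows "pCC0 ns \<eta> nB = (1 - 1 / (1 + ns)) * (1 - 1 / (1 + N))"
proof -
  define w where "w r = (if 1 \<le> r then (tmsv_amp ns r)\<^sup>2 else 0)" for r
  have "out_click_given \<eta> nB 0 = 1 - 1 / (1 + N)"
    unfolding N_def using out_click_given_eq[OF assms(3-5), of 0] by simp
  moreover have "(\<lambda>r. w r * out_click_given \<eta> nB 0) sums ((1 - 1 / (1 + ns)) * out_click_given \<eta> nB 0)"
    unfolding w_def using assms(2) by (intro sums_mult2 tmsv_click_sums)
  moreover have "pCC0 ns \<eta> nB = (\<Sum>r. w r * out_click_given \<eta> nB 0)"
    unfolding pCC0_def w_def by (intro arg_cong[where f = suminf]) (simp add: fun_eq_iff)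
  ultimately show ?thesis
    by (simp add: sums_iff)
qed

lemma pCC1_ge:
  fixes ns \<eta> nB :: real
  defines "N \<equiv> (1 - \<eta>) * nB"
  assumes "0 \<le> ns" "0 \<le> nB" "0 \<le> \<eta>" "\<eta> \<le> 1"
  shows "(1 - 1 / (1 + ns)) * (1 - 1 / (1 + N) + \<eta> / (1 + N)\<^sup>2) \<le> pCC1 ns \<eta> nB"
proof -
  define w where "w r = (if 1 \<le> r then (tmsv_amp ns r)\<^sup>2 else 0)" for r
  define c where "c = 1 - 1 / (1 + N) + \<eta> / (1 + N)\<^sup>2"
  note out = out_click_given_bounds[OF assms(3-5), folded N_def]
  have w_sums: "w sums (1 - 1 / (1 + ns))"
    unfolding w_def using assms(2) by (rule tmsv_click_sums)
  have "summable (\<lambda>r. w r * out_click_given \<eta> nB r)"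
  proof (rule summable_comparison_test' [OF sums_summable[OF w_sums]])
    show "norm (w r * out_click_given \<eta> nB r) \<le> w r" for r
      unfolding w_def using out(1,2)[of r] by (simp add: abs_mult mult_left_le)
  qed
  moreover have "w r * c \<le> w r * out_click_given \<eta> nB r" for r
    unfolding w_def c_def using out(3)[of r] by (simp add: mult_left_mono)
  ultimately have "(\<Sum>r. w r * c) \<le> (\<Sum>r. w r * out_click_given \<eta> nB r)"
    using sums_summable[OF sums_mult2[OF w_sums]] by (intro suminf_le)
  moreover have "(\<Sum>r. w r * c) = (1 - 1 / (1 + ns)) * c"
    using sums_mult2[OF w_sums] by (rule sums_unique[symmetric])
  moreover have "pCC1 ns \<eta> nB = (\<Sum>r. w r * out_click_given \<eta> nB r)"
    unfolding pCC1_def w_def by (intro arg_cong[where f = suminf]) (simp add: fun_eq_iff)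
  ultimately show ?thesis
    unfolding c_def by simp
qed

theorem mainTheorem4:
  fixes ns eta nB N :: real
  assumes "ns > 0" and "0 \<le> eta" and "eta \<le> 1" and "nB \<ge> 0"
    and "N = (1 - eta) * nB"
  shows "pCC0 ns eta nB = (1 - 1 / (1 + ns)) * (1 - 1 / (1 + N)) \<and>
         pCC1 ns eta nB \<ge> (1 - 1 / (1 + ns)) * (1 - 1 / (1 + N) + eta / (1 + N)^2)"
  using pCC0_eq[of ns nB eta] pCC1_ge[of ns nB eta] assms by simp

end
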